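(* Let $V:\mathbb R^3\to\mathbb R$ be continuous with $0<\min V=:V_0$ and $0\in M:=\{x:V(x)=V_0\}$; let $f:\mathbb R\to\mathbb R$ be continuous with $f(u)\ge0$ for $u\ge0$, $f(u)=0$ for $u\le0$, such that there is $q\in(2,6)$ with $\lim_{u\to\infty}f(u)/u^{q-1}=0$ and $\lim_{u\to0}f(u)/u=0$. Let $\mathfrak u$ be a radial, nonpositive function attaining $\min_{u\in\mathcal M_{V_0}}E_{V_0}(u)$, let $T>0$ and $\rho>0$ with $\{x\in\mathbb R^3:d(x,M)\le 2T\}\subset B_\rho$, and let $\Phi_\varepsilon$ and $\beta_\varepsilon$ be as in the context. Then $$\lim_{\varepsilon\to0^+}\beta_\varepsilon(\Phi_\varepsilon(y))=y\quad\text{uniformly in }y\in M.$$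
   Context: $F(t)=\int_0^tf$. $W_\varepsilon=\{u\in H^1(\mathbb R^3):\int V(\varepsilon x)u^2<\infty\}$. $\phi_u(x)=\int\frac{1-e^{-|x-y|}}{|x-y|}u^2(y)dy$, $\mathcal M_\varepsilon=\{u\in W_\varepsilon:\int\phi_uu^2=1\}$. $E_{V_0}(u)=\frac12\int|\nabla u|^2+\frac{V_0}2\int u^2+\int F(u)$ on $H^1(\mathbb R^3)$, $\mathcal M_{V_0}=\{u\in H^1(\mathbb R^3):\int\phi_uu^2=1\}$. For $u\ne0$, $t_\varepsilon(u)>0$ is the unique number with $t_\varepsilon(u)u\in\mathcal M_\varepsilon$. $\eta:[0,\infty)\to[0,1]$ is smooth nonincreasing with $\eta=1$ on $[0,T/2]$, $\eta=0$ on $[T,\infty)$. For $y\in M$, $\Psi_{\varepsilon,y}(x)=\eta(|\varepsilon x-y|)\mathfrak u\big(\frac{\varepsilon x-y}{\varepsilon}\big)$ and $\Phi_\varepsilon(y)=t_\varepsilon(\Psi_{\varepsilon,y})\Psi_{\varepsilon,y}$. $\chi:\mathbb R^3\to\mathbb R^3$, $\chi(x)=x$ if $|x|\le\rho$, $\chi(x)=\rho x/|x|$ if $|x|\ge\rho$. For compactly supported $u\in W_\varepsilon\setminus\{0\}$, $\beta_\varepsilon(u)=\dfrac{\int\chi(\varepsilon x)u^2}{\int u^2}\in\mathbb R^3$. *)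

theory Defs
  imports "HOL-Analysis.Analysis"
begin

type_synonym R3 = "real ^ 3"

definition weak_grad :: "(R3 \<Rightarrow> real) \<Rightarrow> (R3 \<Rightarrow> R3) \<Rightarrow> bool" where
  "weak_grad u g \<longleftrightarrow> (\<forall>i. (\<lambda>x. g x $ i) \<in> borel_measurable lborel) \<and>
     (\<forall>\<phi> \<phi>'. bounded {x. \<phi> x \<noteq> 0} \<and> (\<forall>x. (\<phi> has_derivative \<phi>' x) (at x)) \<and>
           (\<forall>i. continuous_on UNIV (\<lambda>x. \<phi>' x (axis i 1))) \<longrightarrow>
        (\<forall>i. integrable lborel (\<lambda>x. u x * \<phi>' x (axis i 1)) \<and>
             integrable lborel (\<lambda>x. g x $ i * \<phi> x) \<and>
             (\<integral>x. u x * \<phi>' x (axis i 1) \<partial>lborel) = - (\<integral>x. g x $ i * \<phi> x \<partial>lborel)))"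

definition H1 :: "(R3 \<Rightarrow> real) set" where
  "H1 = {u. u \<in> borel_measurable lborel \<and> integrable lborel (\<lambda>x. (u x)\<^sup>2) \<and>
            (\<exists>g. weak_grad u g \<and> integrable lborel (\<lambda>x. (norm (g x))\<^sup>2))}"

definition grad :: "(R3 \<Rightarrow> real) \<Rightarrow> R3 \<Rightarrow> R3" where
  "grad u = (SOME g. weak_grad u g \<and> integrable lborel (\<lambda>x. (norm (g x))\<^sup>2))"

definition F_prim :: "(real \<Rightarrow> real) \<Rightarrow> real \<Rightarrow> real" where
  "F_prim f t = (LBINT s=0..t. f s)"

definition W_sp :: "(R3 \<Rightarrow> real) \<Rightarrow> real \<Rightarrow> (R3 \<Rightarrow> real) set" where
  "W_sp V \<epsilon> = {u \<in> H1. integrable lborel (\<lambda>x. V (\<epsilon> *\<^sub>R x) * (u x)\<^sup>2)}"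

definition phi_pot :: "(R3 \<Rightarrow> real) \<Rightarrow> R3 \<Rightarrow> real" where
  "phi_pot u x = (\<integral>y. (1 - exp (- dist x y)) / dist x y * (u y)\<^sup>2 \<partial>lborel)"

definition Neh_eps :: "(R3 \<Rightarrow> real) \<Rightarrow> real \<Rightarrow> (R3 \<Rightarrow> real) set" where
  "Neh_eps V \<epsilon> = {u \<in> W_sp V \<epsilon>. (\<integral>x. phi_pot u x * (u x)\<^sup>2 \<partial>lborel) = 1}"

definition E_V0 :: "(real \<Rightarrow> real) \<Rightarrow> real \<Rightarrow> (R3 \<Rightarrow> real) \<Rightarrow> real" where
  "E_V0 f V0 u = 1/2 * (\<integral>x. (norm (grad u x))\<^sup>2 \<partial>lborel) + V0 / 2 * (\<integral>x. (u x)\<^sup>2 \<partial>lborel)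
                 + (\<integral>x. F_prim f (u x) \<partial>lborel)"

definition Neh_V0 :: "(R3 \<Rightarrow> real) set" where
  "Neh_V0 = {u \<in> H1. (\<integral>x. phi_pot u x * (u x)\<^sup>2 \<partial>lborel) = 1}"

definition t_eps :: "(R3 \<Rightarrow> real) \<Rightarrow> real \<Rightarrow> (R3 \<Rightarrow> real) \<Rightarrow> real" where
  "t_eps V \<epsilon> u = (THE t. t > 0 \<and> (\<lambda>x. t * u x) \<in> Neh_eps V \<epsilon>)"

definition Psi :: "(real \<Rightarrow> real) \<Rightarrow> (R3 \<Rightarrow> real) \<Rightarrow> real \<Rightarrow> R3 \<Rightarrow> R3 \<Rightarrow> real" where
  "Psi \<eta> uu \<epsilon> y x = \<eta> (norm (\<epsilon> *\<^sub>R x - y)) * uu ((1 / \<epsilon>) *\<^sub>R (\<epsilon> *\<^sub>R x - y))"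

definition Phi :: "(R3 \<Rightarrow> real) \<Rightarrow> (real \<Rightarrow> real) \<Rightarrow> (R3 \<Rightarrow> real) \<Rightarrow> real \<Rightarrow> R3 \<Rightarrow> R3 \<Rightarrow> real" where
  "Phi V \<eta> uu \<epsilon> y = (\<lambda>x. t_eps V \<epsilon> (Psi \<eta> uu \<epsilon> y) * Psi \<eta> uu \<epsilon> y x)"

definition chi :: "real \<Rightarrow> R3 \<Rightarrow> R3" where
  "chi \<rho> x = (if norm x \<le> \<rho> then x else (\<rho> / norm x) *\<^sub>R x)"

definition beta :: "real \<Rightarrow> real \<Rightarrow> (R3 \<Rightarrow> real) \<Rightarrow> R3" where
  "beta \<rho> \<epsilon> u = (\<integral>x. (u x)\<^sup>2 *\<^sub>R chi \<rho> (\<epsilon> *\<^sub>R x) \<partial>lborel) /\<^sub>R (\<integral>x. (u x)\<^sup>2 \<partial>lborel)"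

end

(*
  For small \<epsilon> the barycenter is not merely close to y but equal to it, so the
  convergence is trivially uniform on M. Let R be such that u does not vanish a.e.
  on the ball B_R, and let \<epsilon> R \<le> T/2.

  Write \<Psi>_{\<epsilon>,y}(x) = w(x - y/\<epsilon>) with the radial profile w(z) = \<eta>(|\<epsilon> z|) u(z).
  Since w = u on B_R, \<Psi>_{\<epsilon>,y} is not a.e. zero; it lies in H^1 by the product rule
  for weak gradients, and the Yukawa energy of t \<Psi>_{\<epsilon>,y} is t^4 times a positive
  constant, so t_\<epsilon>(\<Psi>_{\<epsilon>,y}) is a well-defined positive number, and \<beta>_\<epsilon> is
  invariant under this scaling. On the support of \<Psi>_{\<epsilon>,y} we have |\<epsilon> x - y| < T,
  hence \<epsilon> x lies in B_\<rho> and \<chi>(\<epsilon> x) = \<epsilon> x. As w is even, its first moment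
  vanishes, and \<integral> \<Psi>\<^sup>2 \<epsilon> x = \<epsilon> (y/\<epsilon>) \<integral> w\<^sup>2 = y \<integral> \<Psi>\<^sup>2.
*)

theory Submission
  imports Defs
begin

section \<open>Integrals over Euclidean space\<close>

lemma lborel_distr_uminus_euclidean: "distr lborel borel uminus = (lborel :: 'a::euclidean_space measure)"
  using lborel_affine[of "-1" "0::'a"] by (simp add: density_1)

lemma
  fixes f :: "'a::euclidean_space \<Rightarrow> 'b::{banach,second_countable_topology}"
  assumes [measurable]: "f \<in> borel_measurable lborel"
  shows integrable_lborel_translate: "integrable lborel (\<lambda>x. f (a + x)) \<longleftrightarrow> integrable lborel f"
    and integral_lborel_translate: "(\<integral>x. f (a + x) \<partial>lborel) = integral\<^sup>L lborel f"
proof -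
  show "integrable lborel (\<lambda>x. f (a + x)) \<longleftrightarrow> integrable lborel f"
    using integrable_distr_eq[of "(+) a" lborel borel f] by (simp add: lborel_distr_plus)
  show "(\<integral>x. f (a + x) \<partial>lborel) = integral\<^sup>L lborel f"
    using integral_distr[of "(+) a" lborel borel f] by (simp add: lborel_distr_plus)
qed

lemma
  fixes f :: "'a::euclidean_space \<Rightarrow> 'b::{banach,second_countable_topology}"
  assumes [measurable]: "f \<in> borel_measurable lborel"
  shows integrable_lborel_translate_diff: "integrable lborel (\<lambda>x. f (x - a)) \<longleftrightarrow> integrable lborel f"
    and integral_lborel_translate_diff: "(\<integral>x. f (x - a) \<partial>lborel) = integral\<^sup>L lborel f"
  using integrable_lborel_translate[OF assms, of "- a"] integral_lborel_translate[OF assms, of "- a"]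
  by simp_all

lemma integral_lborel_odd_eq_0:
  fixes f :: "'a::euclidean_space \<Rightarrow> 'b::{banach,second_countable_topology}"
  assumes [measurable]: "f \<in> borel_measurable lborel" and odd: "\<And>x. f (- x) = - f x"
  shows "integral\<^sup>L lborel f = 0"
proof -
  have "integral\<^sup>L lborel f = (\<integral>x. f (- x) \<partial>lborel)"
    using integral_distr[of uminus lborel borel f] by (simp add: lborel_distr_uminus_euclidean)
  also have "\<dots> = - integral\<^sup>L lborel f" by (simp add: odd)
  finally have "(2::real) *\<^sub>R integral\<^sup>L lborel f = 0"
    by (simp add: scaleR_2 eq_neg_iff_add_eq_0)
  then show ?thesis by simp
qed

lemma continuous_bounded_support_bounded:
  fixes f :: "'a::euclidean_space \<Rightarrow> real"
  assumes "continuous_on UNIV f" "bounded {x. f x \<noteq> 0}"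
  obtains C where "\<And>x. \<bar>f x\<bar> \<le> C"
proof -
  obtain R where R: "{x. f x \<noteq> 0} \<subseteq> cball 0 R"
    using bounded_subset_ballD[OF assms(2), of 0] ball_subset_cball by blast
  have "bounded (f ` cball 0 R)"
    by (intro compact_imp_bounded compact_continuous_image continuous_on_subset[OF assms(1)]) auto
  then obtain B where B: "\<And>y. y \<in> f ` cball 0 R \<Longrightarrow> norm y \<le> B"
    unfolding bounded_iff by metis
  have "\<bar>f x\<bar> \<le> max B 0" for x
  proof (cases "f x = 0")
    case False
    then have "x \<in> cball 0 R" using R by blast
    then show ?thesis using B[of "f x"] by simp
  qed simp
  then show ?thesis using that by blast
qed

lemma integrable_mult_continuous_bounded_support:
  fixes u \<psi> :: "'a::euclidean_space \<Rightarrow> real"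
  assumes [measurable]: "u \<in> borel_measurable lborel" and u2: "integrable lborel (\<lambda>x. (u x)\<^sup>2)"
    and \<psi>_cont: "continuous_on UNIV \<psi>" and \<psi>_supp: "bounded {x. \<psi> x \<noteq> 0}"
  shows "integrable lborel (\<lambda>x. u x * \<psi> x)"
proof -
  obtain R where R: "{x. \<psi> x \<noteq> 0} \<subseteq> cball 0 R"
    using bounded_subset_ballD[OF \<psi>_supp, of 0] ball_subset_cball by blast
  obtain C where C: "\<And>x. \<bar>\<psi> x\<bar> \<le> C"
    using continuous_bounded_support_bounded[OF \<psi>_cont \<psi>_supp] by blast
  have [measurable]: "\<psi> \<in> borel_measurable lborel"
    using borel_measurable_continuous_onI[OF \<psi>_cont] by simp
  have "integrable lborel (\<lambda>x. indicator (cball 0 R) x *\<^sub>R C\<^sup>2)"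
    by (rule borel_integrable_compact) auto
  then have bound: "integrable lborel (\<lambda>x. (u x)\<^sup>2 + indicator (cball 0 R) x *\<^sub>R C\<^sup>2)"
    using u2 by (rule Bochner_Integration.integrable_add[rotated])
  show ?thesis
  proof (rule Bochner_Integration.integrable_bound[OF bound])
    show "(\<lambda>x. u x * \<psi> x) \<in> borel_measurable lborel" by measurable
    show "AE x in lborel. norm (u x * \<psi> x) \<le> norm ((u x)\<^sup>2 + indicator (cball 0 R) x *\<^sub>R C\<^sup>2)"
    proof (intro AE_I2)
      fix x
      have "2 * (\<bar>u x\<bar> * \<bar>\<psi> x\<bar>) \<le> (u x)\<^sup>2 + (\<psi> x)\<^sup>2"
        using sum_squares_bound[of "\<bar>u x\<bar>" "\<bar>\<psi> x\<bar>"] by (simp add: mult.assoc)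
      moreover have "0 \<le> \<bar>u x\<bar> * \<bar>\<psi> x\<bar>" by simp
      ultimately have "\<bar>u x * \<psi> x\<bar> \<le> (u x)\<^sup>2 + (\<psi> x)\<^sup>2"
        unfolding abs_mult by linarith
      moreover have "(\<psi> x)\<^sup>2 \<le> indicator (cball 0 R) x * C\<^sup>2"
      proof (cases "\<psi> x = 0")
        case False
        then have "x \<in> cball 0 R" using R by blast
        then show ?thesis using power_mono[OF C[of x], of 2] by simp
      qed simp
      ultimately show "norm (u x * \<psi> x) \<le> norm ((u x)\<^sup>2 + indicator (cball 0 R) x *\<^sub>R C\<^sup>2)"
        by (simp add: indicator_def)
    qed
  qed
qed

lemma not_AE_zero_on_cball:
  fixes u :: "'a::euclidean_space \<Rightarrow> real"
  assumes "\<not> (AE x in lborel. u x = 0)"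
  obtains R where "0 < R" "\<not> (AE x in lborel. norm x \<le> R \<longrightarrow> u x = 0)"
proof -
  have "\<exists>R>0. \<not> (AE x in lborel. norm x \<le> R \<longrightarrow> u x = 0)"
  proof (rule ccontr)
    assume "\<not> ?thesis"
    then have "\<forall>n::nat. AE x in lborel. norm x \<le> real (Suc n) \<longrightarrow> u x = 0" by auto
    then have "AE x in lborel. \<forall>n::nat. norm x \<le> real (Suc n) \<longrightarrow> u x = 0"
      by (rule AE_all_countable[THEN iffD2])
    then have "AE x in lborel. u x = 0"
    proof eventually_elim
      case (elim x)
      obtain n where "norm x \<le> real n" using real_arch_simple by blast
      then show ?case using elim[rule_format, of n] by simp
    qed
    then show False using assms by simp
  qed
  then show ?thesis using that by blast
qed

section \<open>Weak gradients and \<open>H1\<close>\<close>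

lemma weak_grad_component_measurable:
  assumes "weak_grad u g"
  shows "(\<lambda>x. g x $ i) \<in> borel_measurable lborel"
  using assms unfolding weak_grad_def by blast

lemma borel_measurable_vecI:
  fixes G :: "'a \<Rightarrow> real ^ 'n"
  assumes "\<And>i. (\<lambda>x. G x $ i) \<in> borel_measurable M"
  shows "G \<in> borel_measurable M"
  by (subst borel_measurable_euclidean_space) (auto simp: Basis_vec_def inner_axis assms)

lemma weak_grad_translate:
  assumes wg: "weak_grad u g" and [measurable]: "u \<in> borel_measurable lborel"
  shows "weak_grad (\<lambda>x. u (x - a)) (\<lambda>x. g (x - a))"
  unfolding weak_grad_def
proof (rule conjI; intro allI impI)
  have [measurable]: "(\<lambda>x. g x $ i) \<in> borel_measurable lborel" for i
    by (rule weak_grad_component_measurable[OF wg])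
  fix i
  show "(\<lambda>x. g (x - a) $ i) \<in> borel_measurable lborel" by measurable
next
  fix \<phi> :: "R3 \<Rightarrow> real" and \<phi>' i
  assume "bounded {x. \<phi> x \<noteq> 0} \<and> (\<forall>x. (\<phi> has_derivative \<phi>' x) (at x)) \<and>
           (\<forall>i. continuous_on UNIV (\<lambda>x. \<phi>' x (axis i 1)))"
  then have \<phi>_supp: "bounded {x. \<phi> x \<noteq> 0}" and \<phi>_deriv: "\<And>x. (\<phi> has_derivative \<phi>' x) (at x)"
    and \<phi>'_cont: "\<And>i. continuous_on UNIV (\<lambda>x. \<phi>' x (axis i 1))" by auto
  define \<psi> where "\<psi> = (\<lambda>z. \<phi> (z + a))"
  define \<psi>' where "\<psi>' = (\<lambda>z. \<phi>' (z + a))"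
  have "{x. \<psi> x \<noteq> 0} = (\<lambda>x. - a + x) ` {x. \<phi> x \<noteq> 0}"
    unfolding \<psi>_def by (auto simp: image_iff intro!: exI[of _ "_ + a"])
  then have \<psi>_supp: "bounded {x. \<psi> x \<noteq> 0}" using \<phi>_supp bounded_translation by metis
  have \<psi>_deriv: "(\<psi> has_derivative \<psi>' x) (at x)" for x
  proof -
    have "((\<lambda>z. z + a) has_derivative (\<lambda>h. h)) (at x)" by (auto intro!: derivative_eq_intros)
    from has_derivative_compose[OF this \<phi>_deriv] show ?thesis unfolding \<psi>_def \<psi>'_def .
  qed
  have \<psi>'_cont: "continuous_on UNIV (\<lambda>x. \<psi>' x (axis i 1))" for i
    unfolding \<psi>'_def
    by (rule continuous_on_compose2[OF \<phi>'_cont]) (auto intro!: continuous_intros)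
  have weak: "integrable lborel (\<lambda>x. u x * \<psi>' x (axis i 1)) \<and>
             integrable lborel (\<lambda>x. g x $ i * \<psi> x) \<and>
             (\<integral>x. u x * \<psi>' x (axis i 1) \<partial>lborel) = - (\<integral>x. g x $ i * \<psi> x \<partial>lborel)"
    using wg \<psi>_supp \<psi>_deriv \<psi>'_cont unfolding weak_grad_def by blast
  have [measurable]: "(\<lambda>x. g x $ i) \<in> borel_measurable lborel" for i
    by (rule weak_grad_component_measurable[OF wg])
  have [measurable]: "\<psi> \<in> borel_measurable lborel"
    using borel_measurable_continuous_onI[OF has_derivative_continuous_on[OF \<psi>_deriv]] by simp
  have [measurable]: "(\<lambda>x. \<psi>' x (axis i 1)) \<in> borel_measurable lborel"
    using borel_measurable_continuous_onI[OF \<psi>'_cont] by simp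
  have m1: "(\<lambda>z. u z * \<psi>' z (axis i 1)) \<in> borel_measurable lborel" by measurable
  have m2: "(\<lambda>z. g z $ i * \<psi> z) \<in> borel_measurable lborel" by measurable
  show "integrable lborel (\<lambda>x. u (x - a) * \<phi>' x (axis i 1)) \<and>
        integrable lborel (\<lambda>x. g (x - a) $ i * \<phi> x) \<and>
        (\<integral>x. u (x - a) * \<phi>' x (axis i 1) \<partial>lborel) = - (\<integral>x. g (x - a) $ i * \<phi> x \<partial>lborel)"
    using weak integrable_lborel_translate_diff[OF m1, of a] integrable_lborel_translate_diff[OF m2, of a]
      integral_lborel_translate_diff[OF m1, of a] integral_lborel_translate_diff[OF m2, of a]
    by (simp add: \<psi>_def \<psi>'_def)
qed

lemma weak_grad_mult:
  assumes wg: "weak_grad u g" and [measurable]: "u \<in> borel_measurable lborel"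
    and u2: "integrable lborel (\<lambda>x. (u x)\<^sup>2)"
    and h_deriv: "\<And>x. (h has_derivative h' x) (at x)"
    and h'_cont: "\<And>i. continuous_on UNIV (\<lambda>x. h' x (axis i 1))"
  shows "weak_grad (\<lambda>x. h x * u x) (\<lambda>x. h x *\<^sub>R g x + u x *\<^sub>R (\<chi> i. h' x (axis i 1)))"
  unfolding weak_grad_def
proof (rule conjI; intro allI impI)
  have h_cont: "continuous_on UNIV h" by (rule has_derivative_continuous_on[OF h_deriv])
  have [measurable]: "h \<in> borel_measurable lborel"
    using borel_measurable_continuous_onI[OF h_cont] by simp
  have [measurable]: "(\<lambda>x. g x $ i) \<in> borel_measurable lborel" for i
    by (rule weak_grad_component_measurable[OF wg])
  fix i
  have [measurable]: "(\<lambda>x. h' x (axis i 1)) \<in> borel_measurable lborel"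
    using borel_measurable_continuous_onI[OF h'_cont] by simp
  show "(\<lambda>x. (h x *\<^sub>R g x + u x *\<^sub>R (\<chi> i. h' x (axis i 1))) $ i) \<in> borel_measurable lborel"
    by simp measurable
next
  have h_cont: "continuous_on UNIV h" by (rule has_derivative_continuous_on[OF h_deriv])
  fix \<phi> :: "R3 \<Rightarrow> real" and \<phi>' i
  assume "bounded {x. \<phi> x \<noteq> 0} \<and> (\<forall>x. (\<phi> has_derivative \<phi>' x) (at x)) \<and>
           (\<forall>i. continuous_on UNIV (\<lambda>x. \<phi>' x (axis i 1)))"
  then have \<phi>_supp: "bounded {x. \<phi> x \<noteq> 0}" and \<phi>_deriv: "\<And>x. (\<phi> has_derivative \<phi>' x) (at x)"
    and \<phi>'_cont: "\<And>i. continuous_on UNIV (\<lambda>x. \<phi>' x (axis i 1))" by auto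
  have \<phi>_cont: "continuous_on UNIV \<phi>" by (rule has_derivative_continuous_on[OF \<phi>_deriv])
  \<comment> \<open>\<open>h \<phi>\<close> is again a test function, and the Leibniz rule moves \<open>h\<close> across\<close>
  define \<psi> where "\<psi> = (\<lambda>x. h x * \<phi> x)"
  define \<psi>' where "\<psi>' = (\<lambda>x v. h x * \<phi>' x v + h' x v * \<phi> x)"
  have \<psi>_supp: "bounded {x. \<psi> x \<noteq> 0}"
    by (rule bounded_subset[OF \<phi>_supp]) (auto simp: \<psi>_def)
  have \<psi>_deriv: "\<forall>x. (\<psi> has_derivative \<psi>' x) (at x)"
    unfolding \<psi>_def \<psi>'_def using \<phi>_deriv h_deriv by (auto intro!: has_derivative_mult)
  have \<psi>'_cont: "\<forall>i. continuous_on UNIV (\<lambda>x. \<psi>' x (axis i 1))"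
    unfolding \<psi>'_def using \<phi>'_cont h'_cont \<phi>_cont h_cont by (auto intro!: continuous_intros)
  have weak: "integrable lborel (\<lambda>x. u x * \<psi>' x (axis i 1)) \<and>
             integrable lborel (\<lambda>x. g x $ i * \<psi> x) \<and>
             (\<integral>x. u x * \<psi>' x (axis i 1) \<partial>lborel) = - (\<integral>x. g x $ i * \<psi> x \<partial>lborel)"
    using wg \<psi>_supp \<psi>_deriv \<psi>'_cont unfolding weak_grad_def by blast
  have correction: "integrable lborel (\<lambda>x. u x * (h' x (axis i 1) * \<phi> x))"
  proof (rule integrable_mult_continuous_bounded_support[OF _ u2])
    show "continuous_on UNIV (\<lambda>x. h' x (axis i 1) * \<phi> x)"
      using h'_cont \<phi>_cont by (auto intro!: continuous_intros)
    show "bounded {x. h' x (axis i 1) * \<phi> x \<noteq> 0}"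
      by (rule bounded_subset[OF \<phi>_supp]) auto
  qed simp
  have "(\<lambda>x. h x * u x * \<phi>' x (axis i 1)) =
      (\<lambda>x. u x * \<psi>' x (axis i 1) - u x * (h' x (axis i 1) * \<phi> x))"
    unfolding \<psi>'_def by (auto simp: algebra_simps)
  moreover have "(\<lambda>x. (h x *\<^sub>R g x + u x *\<^sub>R (\<chi> i. h' x (axis i 1))) $ i * \<phi> x) =
      (\<lambda>x. g x $ i * \<psi> x + u x * (h' x (axis i 1) * \<phi> x))"
    unfolding \<psi>_def by (auto simp: algebra_simps)
  ultimately show "integrable lborel (\<lambda>x. h x * u x * \<phi>' x (axis i 1)) \<and>
        integrable lborel (\<lambda>x. (h x *\<^sub>R g x + u x *\<^sub>R (\<chi> i. h' x (axis i 1))) $ i * \<phi> x) \<and>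
        (\<integral>x. h x * u x * \<phi>' x (axis i 1) \<partial>lborel) =
          - (\<integral>x. (h x *\<^sub>R g x + u x *\<^sub>R (\<chi> i. h' x (axis i 1))) $ i * \<phi> x \<partial>lborel)"
    using weak correction by (simp add: Bochner_Integration.integral_diff Bochner_Integration.integral_add)
qed

lemma H1_translate:
  assumes "u \<in> H1"
  shows "(\<lambda>x. u (x - a)) \<in> H1"
proof -
  obtain g where [measurable]: "u \<in> borel_measurable lborel" and u2: "integrable lborel (\<lambda>x. (u x)\<^sup>2)"
    and wg: "weak_grad u g" and g2: "integrable lborel (\<lambda>x. (norm (g x))\<^sup>2)"
    using assms unfolding H1_def by blast
  have [measurable]: "(\<lambda>x. g x $ i) \<in> borel_measurable lborel" for i
    by (rule weak_grad_component_measurable[OF wg])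
  have "integrable lborel (\<lambda>x. (u (x - a))\<^sup>2)"
    using integrable_lborel_translate_diff[of "\<lambda>x. (u x)\<^sup>2"] u2 by simp
  moreover have "integrable lborel (\<lambda>x. (norm (g (x - a)))\<^sup>2)"
    using integrable_lborel_translate_diff[of "\<lambda>x. (norm (g x))\<^sup>2"] g2 by simp
  ultimately show ?thesis
    using weak_grad_translate[OF wg] unfolding H1_def by auto
qed

lemma H1_mult:
  assumes "u \<in> H1"
    and h_deriv: "\<And>x. (h has_derivative h' x) (at x)"
    and h'_cont: "\<And>i. continuous_on UNIV (\<lambda>x. h' x (axis i 1))"
    and h_bound: "\<And>x. \<bar>h x\<bar> \<le> C" and h'_bound: "\<And>x i. \<bar>h' x (axis i 1)\<bar> \<le> C'"
  shows "(\<lambda>x. h x * u x) \<in> H1"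
proof -
  obtain g where [measurable]: "u \<in> borel_measurable lborel" and u2: "integrable lborel (\<lambda>x. (u x)\<^sup>2)"
    and wg: "weak_grad u g" and g2: "integrable lborel (\<lambda>x. (norm (g x))\<^sup>2)"
    using assms(1) unfolding H1_def by blast
  have [measurable]: "h \<in> borel_measurable lborel"
    using borel_measurable_continuous_onI[OF has_derivative_continuous_on[OF h_deriv]] by simp
  have [measurable]: "(\<lambda>x. g x $ i) \<in> borel_measurable lborel" for i
    by (rule weak_grad_component_measurable[OF wg])
  have [measurable]: "(\<lambda>x. h' x (axis i 1)) \<in> borel_measurable lborel" for i
    using borel_measurable_continuous_onI[OF h'_cont] by simp
  define G where "G = (\<lambda>x. h x *\<^sub>R g x + u x *\<^sub>R (\<chi> i. h' x (axis i 1)))"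
  have [measurable]: "g \<in> borel_measurable lborel" by (rule borel_measurable_vecI) measurable
  have [measurable]: "G \<in> borel_measurable lborel"
    unfolding G_def by (rule borel_measurable_vecI) (simp, measurable)
  have C_nonneg: "0 \<le> C" using h_bound[of 0] by linarith
  have "integrable lborel (\<lambda>x. (h x * u x)\<^sup>2)"
  proof (rule Bochner_Integration.integrable_bound)
    show "integrable lborel (\<lambda>x. C\<^sup>2 * (u x)\<^sup>2)" using u2 by simp
    show "AE x in lborel. norm ((h x * u x)\<^sup>2) \<le> norm (C\<^sup>2 * (u x)\<^sup>2)"
      using power_mono[OF h_bound, of _ 2]
      by (intro AE_I2) (simp add: power_mult_distrib mult_right_mono)
  qed measurable
  moreover have "integrable lborel (\<lambda>x. (norm (G x))\<^sup>2)"
  proof (rule Bochner_Integration.integrable_bound)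
    show "integrable lborel (\<lambda>x. 2 * C\<^sup>2 * (norm (g x))\<^sup>2 + 2 * (3 * C')\<^sup>2 * (u x)\<^sup>2)"
      using g2 u2 by simp
    show "AE x in lborel. norm ((norm (G x))\<^sup>2) \<le> norm (2 * C\<^sup>2 * (norm (g x))\<^sup>2 + 2 * (3 * C')\<^sup>2 * (u x)\<^sup>2)"
    proof (rule AE_I2)
      fix x
      have "norm (\<chi> i. h' x (axis i 1)) \<le> (\<Sum>i\<in>UNIV. \<bar>h' x (axis i 1)\<bar>)"
        using norm_le_l1_cart[of "\<chi> i. h' x (axis i 1)"] by simp
      also have "\<dots> \<le> 3 * C'"
        using sum_bounded_above[of UNIV "\<lambda>i. \<bar>h' x (axis i 1)\<bar>" C'] h'_bound by simp
      finally have "norm (G x) \<le> C * norm (g x) + \<bar>u x\<bar> * (3 * C')"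
        unfolding G_def using norm_triangle_ineq[of "h x *\<^sub>R g x"] h_bound[of x] C_nonneg
        by (smt (verit, best) mult_mono norm_ge_zero abs_ge_zero mult_left_mono norm_scaleR)
      then have "(norm (G x))\<^sup>2 \<le> (C * norm (g x) + \<bar>u x\<bar> * (3 * C'))\<^sup>2"
        by (rule power_mono) simp
      also have "\<dots> \<le> 2 * C\<^sup>2 * (norm (g x))\<^sup>2 + 2 * (3 * C')\<^sup>2 * (u x)\<^sup>2"
        using sum_squares_bound[of "C * norm (g x)" "\<bar>u x\<bar> * (3 * C')"]
        by (simp add: power2_sum power_mult_distrib algebra_simps)
      finally show "norm ((norm (G x))\<^sup>2) \<le> norm (2 * C\<^sup>2 * (norm (g x))\<^sup>2 + 2 * (3 * C')\<^sup>2 * (u x)\<^sup>2)"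
        by simp
    qed
  qed measurable
  ultimately show ?thesis
    using weak_grad_mult[OF wg _ u2 h_deriv h'_cont] unfolding H1_def G_def by auto
qed

lemma H1_scale:
  assumes "u \<in> H1"
  shows "(\<lambda>x. t * u x) \<in> H1"
  using H1_mult[OF assms, of "\<lambda>_. t" "\<lambda>_ _. 0" "\<bar>t\<bar>" 0] by simp

lemma W_sp_if_H1_bounded_support:
  assumes "u \<in> H1" and V_cont: "continuous_on UNIV V" and u_supp: "bounded {x. u x \<noteq> 0}"
  shows "u \<in> W_sp V \<epsilon>"
proof -
  have [measurable]: "u \<in> borel_measurable lborel" and u2: "integrable lborel (\<lambda>x. (u x)\<^sup>2)"
    using assms(1) unfolding H1_def by auto
  have [measurable]: "V \<in> borel_measurable borel"
    using borel_measurable_continuous_onI[OF V_cont] .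
  obtain R where R: "{x. u x \<noteq> 0} \<subseteq> cball 0 R"
    using bounded_subset_ballD[OF u_supp, of 0] ball_subset_cball by blast
  have "bounded ((\<lambda>x. V (\<epsilon> *\<^sub>R x)) ` cball 0 R)"
    by (intro compact_imp_bounded compact_continuous_image continuous_on_compose2[OF V_cont])
      (auto intro!: continuous_intros)
  then obtain C where C: "\<And>x. x \<in> cball 0 R \<Longrightarrow> \<bar>V (\<epsilon> *\<^sub>R x)\<bar> \<le> C"
    unfolding bounded_iff ball_simps real_norm_def by blast
  have "integrable lborel (\<lambda>x. V (\<epsilon> *\<^sub>R x) * (u x)\<^sup>2)"
  proof (rule Bochner_Integration.integrable_bound)
    show "integrable lborel (\<lambda>x. C * (u x)\<^sup>2)" using u2 by simp
    show "AE x in lborel. norm (V (\<epsilon> *\<^sub>R x) * (u x)\<^sup>2) \<le> norm (C * (u x)\<^sup>2)"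
    proof (intro AE_I2)
      fix x
      show "norm (V (\<epsilon> *\<^sub>R x) * (u x)\<^sup>2) \<le> norm (C * (u x)\<^sup>2)"
      proof (cases "u x = 0")
        case False
        then have "\<bar>V (\<epsilon> *\<^sub>R x)\<bar> \<le> \<bar>C\<bar>" using R C by fastforce
        then have "\<bar>V (\<epsilon> *\<^sub>R x)\<bar> * (u x)\<^sup>2 \<le> \<bar>C\<bar> * (u x)\<^sup>2" by (rule mult_right_mono) simp
        then show ?thesis by (simp add: abs_mult)
      qed simp
    qed
  qed measurable
  then show ?thesis using assms(1) unfolding W_sp_def by blast
qed

section \<open>The Yukawa energy and the Nehari scaling\<close>

lemma integral_pos_if_not_AE_zero:
  fixes f :: "'a \<Rightarrow> real"
  assumes "integrable M f" "AE x in M. 0 \<le> f x" "\<not> (AE x in M. f x = 0)"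
  shows "0 < integral\<^sup>L M f"
  using integral_nonneg_AE[OF assms(2)] integral_nonneg_eq_0_iff_AE[OF assms(1,2)] assms(3)
  by linarith

definition yukawa_kernel :: "R3 \<Rightarrow> R3 \<Rightarrow> real" where
  "yukawa_kernel x y = (1 - exp (- dist x y)) / dist x y"

lemma yukawa_kernel_bounds:
  shows "0 \<le> yukawa_kernel x y" "yukawa_kernel x y \<le> 1" "x \<noteq> y \<Longrightarrow> 0 < yukawa_kernel x y"
proof -
  show "0 \<le> yukawa_kernel x y" by (simp add: yukawa_kernel_def)
  show "yukawa_kernel x y \<le> 1"
    using exp_ge_add_one_self[of "- dist x y"]
    by (cases "x = y") (simp_all add: yukawa_kernel_def divide_le_eq)
  show "x \<noteq> y \<Longrightarrow> 0 < yukawa_kernel x y" by (simp add: yukawa_kernel_def)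
qed

lemma phi_pot_eq_yukawa: "phi_pot u x = (\<integral>y. yukawa_kernel x y * (u y)\<^sup>2 \<partial>lborel)"
  by (simp add: phi_pot_def yukawa_kernel_def)

context
  fixes u :: "R3 \<Rightarrow> real"
  assumes u_meas[measurable]: "u \<in> borel_measurable lborel"
    and u2: "integrable lborel (\<lambda>x. (u x)\<^sup>2)"
begin

lemma integrable_yukawa: "integrable lborel (\<lambda>y. yukawa_kernel x y * (u y)\<^sup>2)"
proof (rule Bochner_Integration.integrable_bound[OF u2])
  show "(\<lambda>y. yukawa_kernel x y * (u y)\<^sup>2) \<in> borel_measurable lborel"
    unfolding yukawa_kernel_def by measurable
  show "AE y in lborel. norm (yukawa_kernel x y * (u y)\<^sup>2) \<le> norm ((u y)\<^sup>2)"
    using yukawa_kernel_bounds by (auto intro!: AE_I2 simp: abs_mult mult_left_le_one_le)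
qed

lemma phi_pot_le: "phi_pot u x \<le> (\<integral>y. (u y)\<^sup>2 \<partial>lborel)"
  unfolding phi_pot_eq_yukawa
  by (rule integral_mono[OF integrable_yukawa u2]) (use yukawa_kernel_bounds in \<open>auto simp: mult_left_le_one_le\<close>)

lemma phi_pot_pos:
  assumes "\<not> (AE x in lborel. u x = 0)"
  shows "0 < phi_pot u x"
  unfolding phi_pot_eq_yukawa
proof (rule integral_pos_if_not_AE_zero[OF integrable_yukawa])
  show "AE y in lborel. 0 \<le> yukawa_kernel x y * (u y)\<^sup>2" using yukawa_kernel_bounds by auto
  show "\<not> (AE y in lborel. yukawa_kernel x y * (u y)\<^sup>2 = 0)"
  proof
    assume "AE y in lborel. yukawa_kernel x y * (u y)\<^sup>2 = 0"
    moreover have "AE y in lborel. y \<noteq> x" by (rule AE_lborel_singleton)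
    ultimately have "AE y in lborel. u y = 0"
    proof eventually_elim
      case (elim y)
      then show ?case using yukawa_kernel_bounds(3)[of x y] by simp
    qed
    then show False using assms by simp
  qed
qed

lemma phi_pot_borel_measurable[measurable]: "phi_pot u \<in> borel_measurable lborel"
  unfolding phi_pot_eq_yukawa[abs_def] yukawa_kernel_def by (rule lborel.borel_measurable_lebesgue_integral) measurable

lemma phi_pot_energy_pos:
  assumes nz: "\<not> (AE x in lborel. u x = 0)"
  shows "0 < (\<integral>x. phi_pot u x * (u x)\<^sup>2 \<partial>lborel)"
proof (rule integral_pos_if_not_AE_zero)
  show "integrable lborel (\<lambda>x. phi_pot u x * (u x)\<^sup>2)"
  proof (rule Bochner_Integration.integrable_bound)
    show "integrable lborel (\<lambda>x. (\<integral>y. (u y)\<^sup>2 \<partial>lborel) * (u x)\<^sup>2)" using u2 by simp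
    show "AE x in lborel. norm (phi_pot u x * (u x)\<^sup>2) \<le> norm ((\<integral>y. (u y)\<^sup>2 \<partial>lborel) * (u x)\<^sup>2)"
      using phi_pot_le phi_pot_pos[OF nz]
      by (intro AE_I2) (simp add: abs_mult less_imp_le mult_right_mono)
  qed measurable
  show "AE x in lborel. 0 \<le> phi_pot u x * (u x)\<^sup>2"
    using phi_pot_pos[OF nz] by (simp add: less_imp_le)
  show "\<not> (AE x in lborel. phi_pot u x * (u x)\<^sup>2 = 0)"
  proof
    assume "AE x in lborel. phi_pot u x * (u x)\<^sup>2 = 0"
    then have "AE x in lborel. u x = 0"
    proof eventually_elim
      case (elim x)
      then show ?case using phi_pot_pos[OF nz, of x] by simp
    qed
    then show False using nz by simp
  qed
qed

end

lemma Neh_V0_not_AE_zero: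
  assumes "u \<in> Neh_V0"
  shows "\<not> (AE x in lborel. u x = 0)"
proof
  assume "AE x in lborel. u x = 0"
  then have "(\<integral>x. phi_pot u x * (u x)\<^sup>2 \<partial>lborel) = 0"
    by (intro integral_eq_zero_AE) (auto elim: eventually_mono)
  then show False using assms unfolding Neh_V0_def by simp
qed

lemma phi_pot_energy_scale:
  "(\<integral>x. phi_pot (\<lambda>x. t * u x) x * (t * u x)\<^sup>2 \<partial>lborel) = t ^ 4 * (\<integral>x. phi_pot u x * (u x)\<^sup>2 \<partial>lborel)"
proof -
  have "phi_pot (\<lambda>x. t * u x) x = t\<^sup>2 * phi_pot u x" for x
    unfolding phi_pot_def power_mult_distrib mult.left_commute[of _ "t\<^sup>2"]
    by (rule integral_mult_right_zero)
  then have "(\<lambda>x. phi_pot (\<lambda>x. t * u x) x * (t * u x)\<^sup>2) = (\<lambda>x. t ^ 4 * (phi_pot u x * (u x)\<^sup>2))"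
    by (simp add: fun_eq_iff power_mult_distrib algebra_simps power2_eq_square power4_eq_xxxx)
  then show ?thesis by simp
qed

lemma t_eps_pos:
  assumes W: "\<And>t. (\<lambda>x. t * u x) \<in> W_sp V \<epsilon>" and nz: "\<not> (AE x in lborel. u x = 0)"
  shows "0 < t_eps V \<epsilon> u"
proof -
  have "u \<in> H1" using W[of 1] unfolding W_sp_def by simp
  then have c_pos: "0 < (\<integral>x. phi_pot u x * (u x)\<^sup>2 \<partial>lborel)" (is "0 < ?c")
    using phi_pot_energy_pos[OF _ _ nz] unfolding H1_def by blast
  have Neh: "(\<lambda>x. t * u x) \<in> Neh_eps V \<epsilon> \<longleftrightarrow> t ^ 4 * ?c = 1" for t
    using W[of t] phi_pot_energy_scale[of t u] unfolding Neh_eps_def by simp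
  have "\<exists>!t. t > 0 \<and> (\<lambda>x. t * u x) \<in> Neh_eps V \<epsilon>"
  proof
    define t1 where "t1 = root 4 (1 / ?c)"
    have t1_pos: "t1 > 0" unfolding t1_def using c_pos by (simp add: real_root_gt_zero)
    have t1: "t1 ^ 4 * ?c = 1" unfolding t1_def using c_pos by simp
    then show "t1 > 0 \<and> (\<lambda>x. t1 * u x) \<in> Neh_eps V \<epsilon>" using t1_pos Neh by simp
    fix t2 assume "t2 > 0 \<and> (\<lambda>x. t2 * u x) \<in> Neh_eps V \<epsilon>"
    then have "t2 > 0" "t2 ^ 4 * ?c = t1 ^ 4 * ?c" using Neh t1 by auto
    then have "t2 > 0" "t2 ^ 4 = t1 ^ 4" using c_pos by auto
    then show "t2 = t1" using power_eq_imp_eq_base t1_pos by fastforce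
  qed
  then show ?thesis unfolding t_eps_def by (rule theI'[THEN conjunct1])
qed

section \<open>The barycenter map\<close>

lemma beta_scale:
  assumes "t \<noteq> 0"
  shows "beta \<rho> \<epsilon> (\<lambda>x. t * u x) = beta \<rho> \<epsilon> u"
proof -
  have "(\<integral>x. (t * u x)\<^sup>2 *\<^sub>R chi \<rho> (\<epsilon> *\<^sub>R x) \<partial>lborel) = t\<^sup>2 *\<^sub>R (\<integral>x. (u x)\<^sup>2 *\<^sub>R chi \<rho> (\<epsilon> *\<^sub>R x) \<partial>lborel)"
    by (simp add: power_mult_distrib flip: integral_scaleR_right)
  moreover have "(\<integral>x. (t * u x)\<^sup>2 \<partial>lborel) = t\<^sup>2 * (\<integral>x. (u x)\<^sup>2 \<partial>lborel)"
    by (simp add: power_mult_distrib)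
  ultimately show ?thesis using assms by (simp add: beta_def)
qed

lemma beta_translate_even:
  fixes u w :: "R3 \<Rightarrow> real"
  assumes [measurable]: "w \<in> borel_measurable lborel"
    and u_eq: "\<And>x. u x = w (x - a)"
    and w_even: "\<And>z. w (- z) = w z"
    and w2: "integrable lborel (\<lambda>z. (w z)\<^sup>2)"
    and w_supp: "bounded {z. w z \<noteq> 0}"
    and w_nz: "(\<integral>z. (w z)\<^sup>2 \<partial>lborel) \<noteq> 0"
    and chi_id: "\<And>x. u x \<noteq> 0 \<Longrightarrow> norm (\<epsilon> *\<^sub>R x) \<le> \<rho>"
  shows "beta \<rho> \<epsilon> u = \<epsilon> *\<^sub>R a"
proof -
  define B where "B = (\<integral>z. (w z)\<^sup>2 \<partial>lborel)"
  have u_shift: "u (a + z) = w z" for z by (simp add: u_eq)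
  have [measurable]: "u \<in> borel_measurable lborel" unfolding u_eq[abs_def] by measurable
  obtain R where R: "{z. w z \<noteq> 0} \<subseteq> cball 0 R"
    using bounded_subset_ballD[OF w_supp, of 0] ball_subset_cball by blast
  have w2_moment: "integrable lborel (\<lambda>z. (w z)\<^sup>2 *\<^sub>R z)"
  proof (rule Bochner_Integration.integrable_bound)
    show "integrable lborel (\<lambda>z. R * (w z)\<^sup>2)" using w2 by simp
    show "AE z in lborel. norm ((w z)\<^sup>2 *\<^sub>R z) \<le> norm (R * (w z)\<^sup>2)"
    proof (intro AE_I2)
      fix z
      show "norm ((w z)\<^sup>2 *\<^sub>R z) \<le> norm (R * (w z)\<^sup>2)"
      proof (cases "w z = 0")
        case False
        then have "norm z \<le> \<bar>R\<bar>" using R by fastforce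
        then show ?thesis by (simp add: abs_mult mult_left_mono mult.commute[of _ "(w z)\<^sup>2"])
      qed simp
    qed
  qed measurable
  have odd_moment: "(\<integral>z. (w z)\<^sup>2 *\<^sub>R z \<partial>lborel) = 0"
    by (rule integral_lborel_odd_eq_0) (simp_all add: w_even)
  have "(\<integral>x. (u x)\<^sup>2 *\<^sub>R chi \<rho> (\<epsilon> *\<^sub>R x) \<partial>lborel) = (\<integral>x. (u x)\<^sup>2 *\<^sub>R (\<epsilon> *\<^sub>R x) \<partial>lborel)"
  proof (intro Bochner_Integration.integral_cong)
    fix x
    show "(u x)\<^sup>2 *\<^sub>R chi \<rho> (\<epsilon> *\<^sub>R x) = (u x)\<^sup>2 *\<^sub>R (\<epsilon> *\<^sub>R x)"
      using chi_id[of x] by (cases "u x = 0") (simp_all add: chi_def)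
  qed simp
  also have "\<dots> = (\<integral>z. (w z)\<^sup>2 *\<^sub>R (\<epsilon> *\<^sub>R (a + z)) \<partial>lborel)"
    using integral_lborel_translate[of "\<lambda>x. (u x)\<^sup>2 *\<^sub>R (\<epsilon> *\<^sub>R x)" a] by (simp add: u_shift)
  also have "\<dots> = \<epsilon> *\<^sub>R ((\<integral>z. (w z)\<^sup>2 *\<^sub>R a \<partial>lborel) + (\<integral>z. (w z)\<^sup>2 *\<^sub>R z \<partial>lborel))"
  proof -
    have "(\<lambda>z. (w z)\<^sup>2 *\<^sub>R (\<epsilon> *\<^sub>R (a + z))) = (\<lambda>z. \<epsilon> *\<^sub>R ((w z)\<^sup>2 *\<^sub>R a + (w z)\<^sup>2 *\<^sub>R z))"
      by (simp add: fun_eq_iff scaleR_add_right mult.commute)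
    then show ?thesis
      using Bochner_Integration.integral_add[OF integrable_scaleR_left[OF w2] w2_moment]
      by (simp only: integral_scaleR_right)
  qed
  also have "\<dots> = (\<epsilon> * B) *\<^sub>R a"
    using w2 by (simp add: odd_moment B_def)
  finally have num: "(\<integral>x. (u x)\<^sup>2 *\<^sub>R chi \<rho> (\<epsilon> *\<^sub>R x) \<partial>lborel) = (\<epsilon> * B) *\<^sub>R a" .
  have den: "(\<integral>x. (u x)\<^sup>2 \<partial>lborel) = B"
    using integral_lborel_translate[of "\<lambda>x. (u x)\<^sup>2" a] by (simp add: u_shift B_def)
  show ?thesis using w_nz by (simp add: beta_def num den B_def)
qed

section \<open>The cut-off ground state\<close>

locale radial_cutoff =
  fixes \<eta> :: "real \<Rightarrow> real" and T :: real
  assumes T_pos: "0 < T"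
    and \<eta>_differentiable: "\<And>t. 0 < t \<Longrightarrow> \<eta> differentiable (at t)"
    and deriv_\<eta>_cont: "\<And>t. 0 < t \<Longrightarrow> isCont (deriv \<eta>) t"
    and \<eta>_one: "\<And>t. 0 \<le> t \<Longrightarrow> t \<le> T / 2 \<Longrightarrow> \<eta> t = 1"
    and \<eta>_zero: "\<And>t. T \<le> t \<Longrightarrow> \<eta> t = 0"
    and \<eta>_range: "\<And>t. 0 \<le> t \<Longrightarrow> 0 \<le> \<eta> t \<and> \<eta> t \<le> 1"
begin

definition cutoff :: "R3 \<Rightarrow> real" where
  "cutoff w = \<eta> (norm w)"

text \<open>At \<open>w = 0\<close> the quotient is \<open>0\<close> by the convention \<open>x / 0 = 0\<close>; this is the true
  derivative there, because \<open>cutoff\<close> is constant on \<open>ball 0 (T/2)\<close>.\<close>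

definition cutoff_deriv :: "R3 \<Rightarrow> R3 \<Rightarrow> real" where
  "cutoff_deriv w v = deriv \<eta> (norm w) * (w \<bullet> v) / norm w"

lemma deriv_\<eta>_eq_0_near_0:
  assumes "0 < s" "s < T / 2"
  shows "deriv \<eta> s = 0"
proof -
  have "(\<eta> has_field_derivative 0) (at s)"
    by (rule has_field_derivative_transform_within_open[of "\<lambda>_. 1" _ _ "{0<..<T/2}"])
      (use assms \<eta>_one in auto)
  then show ?thesis by (rule DERIV_imp_deriv)
qed

lemma deriv_\<eta>_eq_0_far:
  assumes "T < s"
  shows "deriv \<eta> s = 0"
proof -
  have "(\<eta> has_field_derivative 0) (at s)"
    by (rule has_field_derivative_transform_within_open[of "\<lambda>_. 0" _ _ "{T<..}"])
      (use assms \<eta>_zero in auto)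
  then show ?thesis by (rule DERIV_imp_deriv)
qed

lemma cutoff_deriv_eq_0_near_0: "norm w < T / 2 \<Longrightarrow> cutoff_deriv w v = 0"
  by (cases "w = 0") (auto simp: cutoff_deriv_def deriv_\<eta>_eq_0_near_0)

lemma cutoff_deriv_eq_0_far: "T < norm w \<Longrightarrow> cutoff_deriv w v = 0"
  by (auto simp: cutoff_deriv_def deriv_\<eta>_eq_0_far)

lemma cutoff_deriv_scaleR: "cutoff_deriv w (c *\<^sub>R v) = c * cutoff_deriv w v"
  by (simp add: cutoff_deriv_def)

lemma has_derivative_cutoff: "(cutoff has_derivative cutoff_deriv w) (at w)"
proof (cases "w = 0")
  case True
  have "((\<lambda>_. 1::real) has_derivative (\<lambda>v. 0)) (at w)" by simp
  then have "(cutoff has_derivative (\<lambda>v. 0)) (at w)"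
    by (rule has_derivative_transform_within_open[where s="ball 0 (T/2)"])
      (use True T_pos \<eta>_one in \<open>auto simp: cutoff_def\<close>)
  moreover have "cutoff_deriv w = (\<lambda>v. 0)" using True by (auto simp: cutoff_deriv_def)
  ultimately show ?thesis by simp
next
  case False
  have "(\<eta> has_field_derivative deriv \<eta> (norm w)) (at (norm w))"
    using \<eta>_differentiable[of "norm w"] False DERIV_deriv_iff_real_differentiable by auto
  then have "(\<eta> has_derivative (\<lambda>h. deriv \<eta> (norm w) * h)) (at (norm w))"
    by (simp add: has_field_derivative_def)
  from has_derivative_compose[OF has_derivative_norm[OF False] this]
  have "((\<lambda>x. \<eta> (norm x)) has_derivative (\<lambda>h. deriv \<eta> (norm w) * (h \<bullet> sgn w))) (at w)" .
  moreover have "cutoff_deriv w = (\<lambda>h. deriv \<eta> (norm w) * (h \<bullet> sgn w))"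
    by (auto simp: cutoff_deriv_def sgn_div_norm inner_commute fun_eq_iff divide_inverse)
  ultimately show ?thesis by (simp add: cutoff_def[abs_def])
qed

lemma continuous_on_cutoff_deriv: "continuous_on UNIV (\<lambda>w. cutoff_deriv w v)"
proof (rule continuous_at_imp_continuous_on, intro ballI)
  fix w :: R3
  show "isCont (\<lambda>w. cutoff_deriv w v) w"
  proof (cases "w = 0")
    case True
    have "isCont (\<lambda>_. 0::real) w" by simp
    then show ?thesis
      by (rule continuous_transform_within[where \<delta>="T/2"])
        (use True T_pos in \<open>auto simp: cutoff_deriv_eq_0_near_0 dist_norm\<close>)
  next
    case False
    have "isCont (\<lambda>w. deriv \<eta> (norm w)) w"
      using isCont_o2[OF continuous_norm[OF continuous_ident] deriv_\<eta>_cont[of "norm w"]] False by simp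
    then show ?thesis unfolding cutoff_deriv_def using False by (intro continuous_intros) auto
  qed
qed

lemma cutoff_deriv_bounded: obtains C where "\<And>w i. \<bar>cutoff_deriv w (axis i 1)\<bar> \<le> C"
proof -
  have "\<exists>C. \<forall>w. \<bar>cutoff_deriv w (axis i 1)\<bar> \<le> C" for i
  proof -
    have "{w. cutoff_deriv w (axis i 1) \<noteq> 0} \<subseteq> cball 0 T"
      using cutoff_deriv_eq_0_far by (force simp: mem_cball_0)
    then have "bounded {w. cutoff_deriv w (axis i 1) \<noteq> 0}" by (rule bounded_subset[rotated]) simp
    then show ?thesis
      using continuous_bounded_support_bounded[OF continuous_on_cutoff_deriv] by metis
  qed
  then obtain C where C: "\<And>w i. \<bar>cutoff_deriv w (axis i 1)\<bar> \<le> C i" by metis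
  have "\<bar>cutoff_deriv w (axis i 1)\<bar> \<le> (\<Sum>j\<in>UNIV. C j)" for w i
    using member_le_sum[of i UNIV C] C[of w i] order_trans[OF abs_ge_zero C] by fastforce
  then show ?thesis using that by blast
qed

lemma abs_cutoff_le_1: "\<bar>cutoff w\<bar> \<le> 1"
  using \<eta>_range[of "norm w"] by (simp add: cutoff_def)

lemma cutoff_eq_0: "T \<le> norm w \<Longrightarrow> cutoff w = 0"
  by (simp add: cutoff_def \<eta>_zero)

lemma cutoff_eq_1: "norm w \<le> T / 2 \<Longrightarrow> cutoff w = 1"
  by (simp add: cutoff_def \<eta>_one)

lemma H1_cutoff_mult:
  assumes "u \<in> H1"
  shows "(\<lambda>x. cutoff (\<epsilon> *\<^sub>R x - y) * u x) \<in> H1"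
proof -
  obtain C where C: "\<And>w i. \<bar>cutoff_deriv w (axis i 1)\<bar> \<le> C"
    using cutoff_deriv_bounded by blast
  show ?thesis
  proof (rule H1_mult[OF assms])
    fix x
    have "((\<lambda>x. \<epsilon> *\<^sub>R x - y) has_derivative (\<lambda>v. \<epsilon> *\<^sub>R v)) (at x)"
      by (auto intro!: derivative_eq_intros)
    from has_derivative_compose[OF this has_derivative_cutoff]
    show "((\<lambda>x. cutoff (\<epsilon> *\<^sub>R x - y)) has_derivative (\<lambda>v. cutoff_deriv (\<epsilon> *\<^sub>R x - y) (\<epsilon> *\<^sub>R v))) (at x)" .
  next
    fix i
    have "continuous_on UNIV (\<lambda>x. \<epsilon> * cutoff_deriv (\<epsilon> *\<^sub>R x - y) (axis i 1))"
      by (intro continuous_intros continuous_on_compose2[OF continuous_on_cutoff_deriv]) auto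
    then show "continuous_on UNIV (\<lambda>x. cutoff_deriv (\<epsilon> *\<^sub>R x - y) (\<epsilon> *\<^sub>R axis i 1))"
      by (simp add: cutoff_deriv_scaleR)
  next
    show "\<bar>cutoff_deriv (\<epsilon> *\<^sub>R x - y) (\<epsilon> *\<^sub>R axis i 1)\<bar> \<le> \<bar>\<epsilon>\<bar> * C" for x i
      unfolding cutoff_deriv_scaleR abs_mult by (intro mult_left_mono C) auto
  qed (rule abs_cutoff_le_1)
qed

lemma continuous_on_cutoff: "continuous_on UNIV cutoff"
  using has_derivative_continuous_on[OF has_derivative_cutoff] .

lemma borel_measurable_cutoff[measurable]: "cutoff \<in> borel_measurable borel"
  using borel_measurable_continuous_onI[OF continuous_on_cutoff] .

definition cutoff_profile :: "real \<Rightarrow> (R3 \<Rightarrow> real) \<Rightarrow> R3 \<Rightarrow> real" where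
  "cutoff_profile \<epsilon> u z = cutoff (\<epsilon> *\<^sub>R z) * u z"

lemma Psi_eq_translate:
  assumes "\<epsilon> \<noteq> 0"
  shows "Psi \<eta> u \<epsilon> y x = cutoff_profile \<epsilon> u (x - (1/\<epsilon>) *\<^sub>R y)"
  using assms by (simp add: Psi_def cutoff_profile_def cutoff_def scaleR_right_diff_distrib)

lemma cutoff_profile_even:
  assumes "\<forall>x y. norm x = norm y \<longrightarrow> u x = u y"
  shows "cutoff_profile \<epsilon> u (- z) = cutoff_profile \<epsilon> u z"
  using assms[rule_format, of "- z" z] by (simp add: cutoff_profile_def cutoff_def)

lemma integrable_cutoff_profile_square:
  assumes "u \<in> H1"
  shows "integrable lborel (\<lambda>z. (cutoff_profile \<epsilon> u z)\<^sup>2)"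
proof -
  have [measurable]: "u \<in> borel_measurable lborel" and u2: "integrable lborel (\<lambda>x. (u x)\<^sup>2)"
    using assms unfolding H1_def by auto
  show ?thesis
  proof (rule Bochner_Integration.integrable_bound[OF u2])
    show "AE z in lborel. norm ((cutoff_profile \<epsilon> u z)\<^sup>2) \<le> norm ((u z)\<^sup>2)"
      using abs_cutoff_le_1 by (intro AE_I2)
        (simp add: cutoff_profile_def power_mult_distrib abs_square_le_1 mult_left_le_one_le)
  qed (simp add: cutoff_profile_def)
qed

lemma bounded_support_cutoff_profile:
  assumes "0 < \<epsilon>"
  shows "bounded {z. cutoff_profile \<epsilon> u z \<noteq> 0}"
proof (rule bounded_subset[OF bounded_cball[of 0 "T / \<epsilon>"]])
  show "{z. cutoff_profile \<epsilon> u z \<noteq> 0} \<subseteq> cball 0 (T / \<epsilon>)"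
    using assms cutoff_eq_0 by (force simp: cutoff_profile_def field_simps)
qed

lemma integral_cutoff_profile_square_pos:
  assumes "u \<in> H1" and u_nz: "\<not> (AE x in lborel. norm x \<le> R \<longrightarrow> u x = 0)"
    and \<epsilon>_pos: "0 < \<epsilon>" and \<epsilon>_small: "\<epsilon> * R \<le> T / 2"
  shows "0 < (\<integral>z. (cutoff_profile \<epsilon> u z)\<^sup>2 \<partial>lborel)"
proof (rule integral_pos_if_not_AE_zero[OF integrable_cutoff_profile_square[OF assms(1)]])
  show "AE z in lborel. 0 \<le> (cutoff_profile \<epsilon> u z)\<^sup>2" by simp
  have agree: "cutoff_profile \<epsilon> u z = u z" if "norm z \<le> R" for z
  proof -
    have "\<epsilon> * norm z \<le> \<epsilon> * R" using that \<epsilon>_pos by (simp add: mult_left_mono)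
    moreover have "norm (\<epsilon> *\<^sub>R z) = \<epsilon> * norm z" using \<epsilon>_pos by simp
    ultimately have "norm (\<epsilon> *\<^sub>R z) \<le> T / 2" using \<epsilon>_small by linarith
    then show ?thesis by (simp add: cutoff_profile_def cutoff_eq_1)
  qed
  show "\<not> (AE z in lborel. (cutoff_profile \<epsilon> u z)\<^sup>2 = 0)"
  proof
    assume "AE z in lborel. (cutoff_profile \<epsilon> u z)\<^sup>2 = 0"
    then have "AE z in lborel. norm z \<le> R \<longrightarrow> u z = 0"
      by (rule eventually_mono) (use agree in fastforce)
    then show False using u_nz by simp
  qed
qed

lemma Psi_support:
  assumes "Psi \<eta> u \<epsilon> y x \<noteq> 0"
  shows "dist (\<epsilon> *\<^sub>R x) y < T"
  using assms \<eta>_zero[of "norm (\<epsilon> *\<^sub>R x - y)"] by (force simp: Psi_def dist_norm)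

lemma Psi_support_scaled_in_ball:
  assumes "V y = V0" and M_ball: "{x. infdist x {z. V z = V0} \<le> 2 * T} \<subseteq> ball 0 \<rho>"
    and "Psi \<eta> u \<epsilon> y x \<noteq> 0"
  shows "norm (\<epsilon> *\<^sub>R x) \<le> \<rho>"
proof -
  have "infdist (\<epsilon> *\<^sub>R x) {z. V z = V0} \<le> dist (\<epsilon> *\<^sub>R x) y"
    using assms(1) by (intro infdist_le) simp
  then have "infdist (\<epsilon> *\<^sub>R x) {z. V z = V0} \<le> 2 * T"
    using Psi_support[OF assms(3)] T_pos by simp
  then show ?thesis using M_ball by fastforce
qed

lemma bounded_support_Psi:
  assumes "0 < \<epsilon>"
  shows "bounded {x. Psi \<eta> u \<epsilon> y x \<noteq> 0}"
proof -
  have "{x. Psi \<eta> u \<epsilon> y x \<noteq> 0} = (\<lambda>z. (1/\<epsilon>) *\<^sub>R y + z) ` {z. cutoff_profile \<epsilon> u z \<noteq> 0}"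
    using assms by (force simp: Psi_eq_translate image_iff intro: exI[of _ "_ - (1/\<epsilon>) *\<^sub>R y"])
  then show ?thesis using bounded_translation[OF bounded_support_cutoff_profile[OF assms]] by simp
qed

lemma H1_Psi:
  assumes "u \<in> H1" "\<epsilon> \<noteq> 0"
  shows "Psi \<eta> u \<epsilon> y \<in> H1"
proof -
  have "Psi \<eta> u \<epsilon> y = (\<lambda>x. cutoff (\<epsilon> *\<^sub>R x - y) * u (x - (1/\<epsilon>) *\<^sub>R y))"
    using assms(2) by (simp add: fun_eq_iff Psi_def cutoff_def scaleR_right_diff_distrib)
  then show ?thesis using H1_cutoff_mult[OF H1_translate[OF assms(1)]] by simp
qed

lemma beta_Phi_eq:
  assumes u_H1: "u \<in> H1" and u_radial: "\<forall>x y. norm x = norm y \<longrightarrow> u x = u y"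
    and u_nz: "\<not> (AE x in lborel. norm x \<le> R \<longrightarrow> u x = 0)"
    and \<epsilon>_pos: "0 < \<epsilon>" and \<epsilon>_small: "\<epsilon> * R \<le> T / 2"
    and V_cont: "continuous_on UNIV V" and y: "V y = V0"
    and M_ball: "{x. infdist x {z. V z = V0} \<le> 2 * T} \<subseteq> ball 0 \<rho>"
  shows "beta \<rho> \<epsilon> (Phi V \<eta> u \<epsilon> y) = y"
proof -
  define a where "a = (1/\<epsilon>) *\<^sub>R y"
  define \<Psi> where "\<Psi> = Psi \<eta> u \<epsilon> y"
  have \<Psi>_eq: "\<Psi> x = cutoff_profile \<epsilon> u (x - a)" for x
    using Psi_eq_translate \<epsilon>_pos by (simp add: \<Psi>_def a_def)
  have profile_pos: "0 < (\<integral>z. (cutoff_profile \<epsilon> u z)\<^sup>2 \<partial>lborel)"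
    by (rule integral_cutoff_profile_square_pos[OF u_H1 u_nz \<epsilon>_pos \<epsilon>_small])
  have [measurable]: "u \<in> borel_measurable lborel" using u_H1 unfolding H1_def by auto
  have [measurable]: "cutoff_profile \<epsilon> u \<in> borel_measurable lborel"
    unfolding cutoff_profile_def[abs_def] by measurable
  have \<Psi>_nz: "\<not> (AE x in lborel. \<Psi> x = 0)"
  proof
    assume "AE x in lborel. \<Psi> x = 0"
    then have "(\<integral>x. (cutoff_profile \<epsilon> u (x - a))\<^sup>2 \<partial>lborel) = 0"
      by (intro integral_eq_zero_AE) (auto simp: \<Psi>_eq)
    then show False
      using profile_pos integral_lborel_translate_diff[of "\<lambda>z. (cutoff_profile \<epsilon> u z)\<^sup>2" a] by simp
  qed
  have W: "(\<lambda>x. t * \<Psi> x) \<in> W_sp V \<epsilon>" for t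
  proof (rule W_sp_if_H1_bounded_support[OF H1_scale V_cont])
    show "\<Psi> \<in> H1" unfolding \<Psi>_def using H1_Psi[OF u_H1] \<epsilon>_pos by simp
    show "bounded {x. t * \<Psi> x \<noteq> 0}"
      by (rule bounded_subset[OF bounded_support_Psi[OF \<epsilon>_pos]]) (auto simp: \<Psi>_def)
  qed
  have "beta \<rho> \<epsilon> (Phi V \<eta> u \<epsilon> y) = beta \<rho> \<epsilon> \<Psi>"
    using beta_scale t_eps_pos[OF W \<Psi>_nz] by (simp add: Phi_def \<Psi>_def)
  also have "\<dots> = \<epsilon> *\<^sub>R a"
    using beta_translate_even[OF _ \<Psi>_eq cutoff_profile_even[OF u_radial]
        integrable_cutoff_profile_square[OF u_H1] bounded_support_cutoff_profile[OF \<epsilon>_pos]]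
      profile_pos Psi_support_scaled_in_ball[OF y M_ball] by (simp add: \<Psi>_def)
  also have "\<epsilon> *\<^sub>R a = y" using \<epsilon>_pos by (simp add: a_def)
  finally show ?thesis .
qed

end

lemma uniform_limit_eventually_eq:
  assumes "\<forall>\<^sub>F n in F. \<forall>x\<in>S. f n x = g x"
  shows "uniform_limit S f g F"
  unfolding uniform_limit_iff using assms by (auto elim: eventually_mono)

theorem lemma5p2:
  fixes V :: "R3 \<Rightarrow> real" and V0 :: real and f :: "real \<Rightarrow> real"
    and uu :: "R3 \<Rightarrow> real" and \<eta> :: "real \<Rightarrow> real" and T \<rho> :: real
  assumes V_cont: "continuous_on UNIV V"
    and V0_pos: "0 < V0" and V0_min: "\<forall>x. V0 \<le> V x" and V_0: "V 0 = V0"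
    and f_cont: "continuous_on UNIV f"
    and f_nonneg: "\<forall>u\<ge>0. f u \<ge> 0" and f_neg: "\<forall>u\<le>0. f u = 0"
    and f_inf: "\<exists>q. 2 < q \<and> q < 6 \<and> ((\<lambda>u. f u / u powr (q - 1)) \<longlongrightarrow> 0) at_top"
    and f_zero: "((\<lambda>u. f u / u) \<longlongrightarrow> 0) (at 0)"
    and uu_radial: "\<forall>x y. norm x = norm y \<longrightarrow> uu x = uu y"
    and uu_nonpos: "\<forall>x. uu x \<le> 0"
    and uu_in: "uu \<in> Neh_V0"
    and uu_min: "\<forall>u\<in>Neh_V0. E_V0 f V0 uu \<le> E_V0 f V0 u"
    and T_pos: "0 < T" and \<rho>_pos: "0 < \<rho>"
    and \<eta>_smooth: "\<forall>k. \<forall>t>0. (deriv ^^ k) \<eta> differentiable (at t)"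
    and \<eta>_range: "\<forall>t\<ge>0. 0 \<le> \<eta> t \<and> \<eta> t \<le> 1"
    and \<eta>_mono: "\<forall>s t. 0 \<le> s \<and> s \<le> t \<longrightarrow> \<eta> t \<le> \<eta> s"
    and \<eta>_one: "\<forall>t. 0 \<le> t \<and> t \<le> T / 2 \<longrightarrow> \<eta> t = 1"
    and \<eta>_zero: "\<forall>t\<ge>T. \<eta> t = 0"
    and M_ball: "{x. infdist x {z. V z = V0} \<le> 2 * T} \<subseteq> ball 0 \<rho>"
  shows "uniform_limit {z. V z = V0} (\<lambda>\<epsilon> y. beta \<rho> \<epsilon> (Phi V \<eta> uu \<epsilon> y)) (\<lambda>y. y) (at_right 0)"
proof -
  interpret radial_cutoff \<eta> T
  proof
    show "\<eta> differentiable (at t)" if "0 < t" for t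
      using \<eta>_smooth[rule_format, of t 0] that by simp
    show "isCont (deriv \<eta>) t" if "0 < t" for t
      using \<eta>_smooth[rule_format, of t 1] that by (simp add: differentiable_imp_continuous_within)
  qed (use T_pos \<eta>_one \<eta>_zero \<eta>_range in auto)
  have uu_H1: "uu \<in> H1" using uu_in unfolding Neh_V0_def by simp
  obtain R where R_pos: "0 < R" and R: "\<not> (AE x in lborel. norm x \<le> R \<longrightarrow> uu x = 0)"
    using not_AE_zero_on_cball[OF Neh_V0_not_AE_zero[OF uu_in]] by blast
  show ?thesis
  proof (rule uniform_limit_eventually_eq, unfold eventually_at_right_field,
      intro exI[of _ "T / (2 * R)"] conjI allI impI ballI)
    show "0 < T / (2 * R)" using T_pos R_pos by simp
    fix \<epsilon> y assume "0 < \<epsilon>" "\<epsilon> < T / (2 * R)" "y \<in> {z. V z = V0}"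
    moreover from this have "\<epsilon> * R \<le> T / 2" using R_pos by (simp add: field_simps)
    ultimately show "beta \<rho> \<epsilon> (Phi V \<eta> uu \<epsilon> y) = y"
      using beta_Phi_eq[OF uu_H1 uu_radial R _ _ V_cont _ M_ball] by simp
  qed
qed

end
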